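(* Let $p$ be a prime and $R=\mathcal{O}_{\mathbb{C}_p}$ the valuation ring of $\mathbb{C}_p$. Then $R$ does not satisfy the following condition: for any $r_0,r_1,\dots\in R$ with $r_0+I_0\supseteq r_1+I_1\supseteq r_2+I_2\supseteq\cdots$, the intersection $\bigcap_{i\ge0}(r_i+I_i)$ is nonempty.
   Context: $\mathbb{C}_p$ is the completion of an algebraic closure of $\mathbb{Q}_p$. For a commutative ring $R$, define ideals $I_0=R$ and $I_i=\{r\in R: r^p\in pI_{i-1}\}$ for $i>0$. *)

theory Defs
  imports "HOL-Computational_Algebra.Computational_Algebra"
begin

definition padic_abs :: "nat \<Rightarrow> rat \<Rightarrow> real" where
  "padic_abs p r = (if r = 0 then 0 else
     (case quotient_of r of (a, b) \<Rightarrow>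
        real p ^ multiplicity (int p) b / real p ^ multiplicity (int p) a))"

definition nonarch_abs :: "('k::field \<Rightarrow> real) \<Rightarrow> bool" where
  "nonarch_abs v \<longleftrightarrow> v 0 = 0 \<and> (\<forall>x. x \<noteq> 0 \<longrightarrow> v x > 0) \<and>
     (\<forall>x y. v (x * y) = v x * v y) \<and> (\<forall>x y. v (x + y) \<le> max (v x) (v y))"

definition abs_complete :: "('k::field \<Rightarrow> real) \<Rightarrow> bool" where
  "abs_complete v \<longleftrightarrow> (\<forall>s::nat \<Rightarrow> 'k.
     (\<forall>e>0. \<exists>N. \<forall>m\<ge>N. \<forall>n\<ge>N. v (s m - s n) < e) \<longrightarrow>
     (\<exists>L. \<forall>e>0. \<exists>N. \<forall>n\<ge>N. v (s n - L) < e))"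

definition alg_closed_field :: "'k::field itself \<Rightarrow> bool" where
  "alg_closed_field _ \<longleftrightarrow> (\<forall>q::'k poly. degree q > 0 \<longrightarrow> (\<exists>x. poly q x = 0))"

text \<open>(K, v) is (isometric to) C_p: an algebraically closed field of characteristic 0,
  complete for a non-archimedean absolute value extending the p-adic one on Q, in which
  the algebraic numbers (an algebraic closure of Q, hence of a dense copy of Qbar_p) are dense.
  This characterizes C_p = completion of an algebraic closure of Q_p up to isometric isomorphism.\<close>
definition is_Cp :: "nat \<Rightarrow> ('k::field_char_0 \<Rightarrow> real) \<Rightarrow> bool" where
  "is_Cp p v \<longleftrightarrow> nonarch_abs v \<and> abs_complete v \<and> alg_closed_field TYPE('k) \<and>
     (\<forall>r. v (of_rat r) = padic_abs p r) \<and>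
     (\<forall>x. \<forall>e>0. \<exists>y. algebraic y \<and> v (x - y) < e)"

definition val_ring :: "('k::field \<Rightarrow> real) \<Rightarrow> 'k set" where
  "val_ring v = {x. v x \<le> 1}"

fun I_seq :: "nat \<Rightarrow> 'k::comm_ring_1 set \<Rightarrow> nat \<Rightarrow> 'k set" where
  "I_seq p R 0 = R"
| "I_seq p R (Suc i) = {r \<in> R. r ^ p \<in> {of_nat p * x | x. x \<in> I_seq p R i}}"

definition coset :: "'k::plus \<Rightarrow> 'k set \<Rightarrow> 'k set" where
  "coset r I = {r + x | x. x \<in> I}"

definition nested_coset_condition :: "nat \<Rightarrow> 'k::comm_ring_1 set \<Rightarrow> bool" where
  "nested_coset_condition p R \<longleftrightarrow> (\<forall>r::nat \<Rightarrow> 'k. (\<forall>i. r i \<in> R) \<longrightarrow>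
     (\<forall>i. coset (r (Suc i)) (I_seq p R (Suc i)) \<subseteq> coset (r i) (I_seq p R i)) \<longrightarrow>
     (\<Inter>i. coset (r i) (I_seq p R i)) \<noteq> {})"

end

theory Submission
  imports Defs "HOL-Library.Countable_Set"
begin

text \<open>
  Let \<open>|c\<^sub>0| = 1\<close> and \<open>c\<^sub>i\<^sub>+\<^sub>1\<^sup>p = p c\<^sub>i\<close>. Then
  \<open>I\<^sub>i\<close> is the closed ball of radius \<open>|c\<^sub>i|\<close> about \<open>0\<close>, and these radii
  decrease strictly to the positive limit \<open>p\<^sup>-\<^sup>1\<^sup>/\<^sup>(\<^sup>p\<^sup>-\<^sup>1\<^sup>)\<close>. So the
  condition says that every nested sequence of closed balls with these radii has a common point.
  But \<open>\<complex>\<^sub>p\<close> has a countable dense subset, the algebraic numbers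
  \<open>a\<^sub>0, a\<^sub>1, \<dots>\<close>, and one can choose the \<open>i+1\<close>-st ball inside the \<open>i\<close>-th one
  so that it misses \<open>a\<^sub>i\<close>. A common point of all balls would then be at distance at least
  \<open>p\<^sup>-\<^sup>1\<^sup>/\<^sup>(\<^sup>p\<^sup>-\<^sup>1\<^sup>)\<close> from every algebraic number, contradicting density.
\<close>

lemma countable_int_poly: "countable (UNIV :: int poly set)"
proof -
  have "countable (range (coeffs :: int poly \<Rightarrow> int list))"
    by (rule countable_subset[OF subset_UNIV]) simp
  moreover have "inj (coeffs :: int poly \<Rightarrow> int list)"
    by (simp add: inj_on_def coeffs_eq_iff)
  ultimately show ?thesis
    by (rule countable_image_inj_on)
qed

lemma countable_algebraic: "countable {x::'k::field_char_0. algebraic x}"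
proof (rule countable_subset)
  show "{x::'k. algebraic x} \<subseteq> (\<Union>q\<in>{q::int poly. q \<noteq> 0}. {x. poly (map_poly of_int q) x = 0})"
    by (auto elim!: algebraicE')
  show "countable (\<Union>q\<in>{q::int poly. q \<noteq> 0}. {x::'k. poly (map_poly of_int q) x = 0})"
  proof (rule countable_UN)
    show "countable {q::int poly. q \<noteq> 0}"
      by (rule countable_subset[OF subset_UNIV countable_int_poly])
    fix q :: "int poly"
    assume "q \<in> {q. q \<noteq> 0}"
    then have "map_poly (of_int :: int \<Rightarrow> 'k) q \<noteq> 0"
      by (simp add: map_poly_eq_0_iff)
    then show "countable {x::'k. poly (map_poly of_int q) x = 0}"
      by (intro countable_finite poly_roots_finite)
  qed
qed

lemma padic_abs_prime: "prime p \<Longrightarrow> padic_abs p (of_nat p) = 1 / real p"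
  by (simp add: padic_abs_def multiplicity_self prime_gt_0_nat)

lemma alg_closed_field_nth_root:
  fixes a :: "'k::field"
  assumes "alg_closed_field TYPE('k)" and "n \<ge> 1"
  shows "\<exists>z. z ^ n = a"
proof -
  have "degree (monom (1::'k) n + [:-a:]) = n"
    using assms(2) by (subst degree_add_eq_left) (auto simp: degree_monom_eq)
  then obtain z where "poly (monom (1::'k) n + [:-a:]) z = 0"
    using assms unfolding alg_closed_field_def by (metis not_one_le_zero neq0_conv)
  then show ?thesis
    by (auto simp: poly_monom)
qed

lemma alg_closed_field_root_chain:
  fixes a b :: "'k::field"
  assumes "alg_closed_field TYPE('k)" and "n \<ge> 1"
  obtains c :: "nat \<Rightarrow> 'k" where "c 0 = a" and "\<And>i. c (Suc i) ^ n = b * c i"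
proof
  define root where "root x = (SOME z. z ^ n = b * x)" for x :: 'k
  have root: "root x ^ n = b * x" for x
    unfolding root_def by (rule someI_ex) (rule alg_closed_field_nth_root[OF assms])
  show "(root ^^ 0) a = a" and "(root ^^ Suc i) a ^ n = b * (root ^^ i) a" for i
    by (simp_all add: root)
qed

context
  fixes v :: "'k::field \<Rightarrow> real"
  assumes v: "nonarch_abs v"
begin

lemma nonarch_abs_zero: "v 0 = 0"
  and nonarch_abs_pos: "x \<noteq> 0 \<Longrightarrow> 0 < v x"
  and nonarch_abs_mult: "v (x * y) = v x * v y"
  and nonarch_abs_add: "v (x + y) \<le> max (v x) (v y)"
  using v unfolding nonarch_abs_def by blast+

lemma nonarch_abs_nonneg: "0 \<le> v x"
  using nonarch_abs_zero nonarch_abs_pos by (cases "x = 0") (auto simp: less_imp_le)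

lemma nonarch_abs_one: "v 1 = 1"
  using nonarch_abs_mult[of 1 1] nonarch_abs_pos[of 1] by simp

lemma nonarch_abs_power: "v (x ^ n) = v x ^ n"
  by (induction n) (simp_all add: nonarch_abs_one nonarch_abs_mult)

lemma nonarch_abs_minus: "v (- x) = v x"
proof -
  have "v (-1) ^ 2 = 1 ^ 2"
    using nonarch_abs_mult[of "-1" "-1"] nonarch_abs_one by (simp add: power2_eq_square)
  then have "v (-1) = 1"
    using nonarch_abs_nonneg[of "-1"] power2_eq_iff_nonneg[of "v (-1)" 1] by simp
  then show ?thesis
    using nonarch_abs_mult[of "-1" x] by simp
qed

lemma nonarch_abs_diff_triangle: "v (x - z) \<le> max (v (x - y)) (v (y - z))"
  using nonarch_abs_add[of "x - y" "y - z"] by simp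

lemma nonarch_abs_diff_commute: "v (x - y) = v (y - x)"
  using nonarch_abs_minus[of "x - y"] by simp

end

definition abs_ball :: "('k::ab_group_add \<Rightarrow> real) \<Rightarrow> 'k \<Rightarrow> real \<Rightarrow> 'k set" where
  "abs_ball v a \<rho> = {z. v (z - a) \<le> \<rho>}"

lemma abs_ball_subset:
  assumes "nonarch_abs v" and "v (b - a) \<le> \<rho>" and "\<sigma> \<le> \<rho>"
  shows "abs_ball v b \<sigma> \<subseteq> abs_ball v a \<rho>"
proof
  fix z
  assume "z \<in> abs_ball v b \<sigma>"
  then show "z \<in> abs_ball v a \<rho>"
    using assms nonarch_abs_diff_triangle[OF assms(1), where x=z and y=b and z=a]
    by (auto simp: abs_ball_def)
qed

text \<open>If \<open>a\<close> lies in the small ball about \<open>r\<close>, moving the centre by \<open>c\<close> expels it.\<close>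
lemma abs_ball_step_avoiding:
  assumes "nonarch_abs v" and "v c' < v c"
  shows "\<exists>r'. v (r' - r) \<le> v c \<and> a \<notin> abs_ball v r' (v c')"
proof (cases "a \<in> abs_ball v r (v c')")
  case True
  have "v c \<le> max (v (r + c - a)) (v (a - r))"
    using nonarch_abs_diff_triangle[OF assms(1), where x="r + c" and y=a and z=r] by simp
  then have "a \<notin> abs_ball v (r + c) (v c')"
    using True assms(2) nonarch_abs_diff_commute[OF assms(1), of a "r + c"]
    by (auto simp: abs_ball_def)
  then show ?thesis
    by (intro exI[of _ "r + c"]) simp
next
  case False
  then show ?thesis
    using nonarch_abs_nonneg[OF assms(1), of c]
    by (intro exI[of _ r]) (simp add: nonarch_abs_zero[OF assms(1)])
qed

lemma nonarch_abs_nested_balls_empty: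
  fixes v :: "'k::field \<Rightarrow> real" and D :: "'k set" and c :: "nat \<Rightarrow> 'k"
  assumes v: "nonarch_abs v" and "countable D"
    and dense: "\<And>x e. 0 < e \<Longrightarrow> \<exists>y\<in>D. v (x - y) < e"
    and dec: "\<And>i. v (c (Suc i)) < v (c i)"
    and "0 < \<delta>" and lower: "\<And>i. \<delta> < v (c i)"
  obtains r where "r 0 = 0"
    and "\<And>i. abs_ball v (r (Suc i)) (v (c (Suc i))) \<subseteq> abs_ball v (r i) (v (c i))"
    and "(\<Inter>i. abs_ball v (r i) (v (c i))) = {}"
proof -
  define a where "a = from_nat_into D"
  define next_centre where "next_centre i x =
    (SOME x'. v (x' - x) \<le> v (c i) \<and> a i \<notin> abs_ball v x' (v (c (Suc i))))" for i x
  have next_centre: "v (next_centre i x - x) \<le> v (c i)"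
    "a i \<notin> abs_ball v (next_centre i x) (v (c (Suc i)))" for i x
    using someI_ex[OF abs_ball_step_avoiding[OF v dec[of i], where r=x and a="a i"]]
    unfolding next_centre_def by simp_all
  define r where "r = rec_nat 0 next_centre"
  have r_Suc: "r (Suc i) = next_centre i (r i)" for i
    by (simp add: r_def)
  have nested: "abs_ball v (r (Suc i)) (v (c (Suc i))) \<subseteq> abs_ball v (r i) (v (c i))" for i
    by (rule abs_ball_subset[OF v]) (simp_all add: r_Suc next_centre(1) less_imp_le[OF dec])
  have False if "\<forall>i. x \<in> abs_ball v (r i) (v (c i))" for x
  proof -
    obtain y where "y \<in> D" and y: "v (y - x) < \<delta>"
      using dense[OF \<open>0 < \<delta>\<close>] nonarch_abs_diff_commute[OF v] by metis
    then obtain n where "a n = y"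
      using from_nat_into_surj[OF \<open>countable D\<close>] unfolding a_def by blast
    have "v (x - r (Suc n)) \<le> v (c (Suc n))"
      using that by (simp add: abs_ball_def)
    moreover have "v (y - x) < v (c (Suc n))"
      using y lower[of "Suc n"] by linarith
    ultimately have "y \<in> abs_ball v (r (Suc n)) (v (c (Suc n)))"
      using nonarch_abs_diff_triangle[OF v, where x=y and y=x and z="r (Suc n)"]
      by (simp add: abs_ball_def)
    then show False
      using next_centre(2)[of n "r n"] \<open>a n = y\<close> by (simp add: r_Suc)
  qed
  then have "(\<Inter>i. abs_ball v (r i) (v (c i))) = {}"
    by blast
  then show ?thesis
    using that[of r] nested by (simp add: r_def)
qed

lemma root_chain_radii:
  fixes s :: "nat \<Rightarrow> real"
  assumes "2 \<le> p" and "0 < q" and "q < 1" and "s 0 = 1"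
    and s_Suc: "\<And>i. s (Suc i) ^ p = s i * q" and s_nonneg: "\<And>i. 0 \<le> s i"
  shows "root (p - 1) q < s i" and "s (Suc i) < s i"
proof -
  define \<rho> where "\<rho> = root (p - 1) q"
  have p: "p = Suc (p - 1)" "0 < p - 1"
    using assms(1) by simp_all
  have \<rho>: "0 < \<rho>" "\<rho> ^ (p - 1) = q"
    unfolding \<rho>_def using p(2) \<open>0 < q\<close> by (rule real_root_gt_zero, rule real_root_pow_pos)
  have pow_split: "x ^ p = x * x ^ (p - 1)" for x :: real
    by (subst p(1)) simp
  have lower: "\<rho> < s i" for i
  proof (induction i)
    case 0
    show ?case
      using p(2) \<open>q < 1\<close> \<open>s 0 = 1\<close> by (simp add: \<rho>_def)
  next
    case (Suc i)
    have "\<rho> ^ p = \<rho> * q"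
      by (subst pow_split) (simp only: \<rho>(2))
    also have "\<dots> < s (Suc i) ^ p"
      using Suc \<open>0 < q\<close> by (simp add: s_Suc)
    finally show ?case
      by (rule power_less_imp_less_base[OF _ s_nonneg])
  qed
  then show "root (p - 1) q < s i"
    by (simp add: \<rho>_def)
  have "s (Suc i) ^ p = s i * \<rho> ^ (p - 1)"
    by (simp only: s_Suc \<rho>(2))
  also have "\<dots> < s i * s i ^ (p - 1)"
    using lower[of i] \<rho>(1) p(2) by (intro mult_strict_left_mono power_strict_mono) auto
  also have "\<dots> = s i ^ p"
    by (rule pow_split[symmetric])
  finally show "s (Suc i) < s i"
    by (rule power_less_imp_less_base[OF _ s_nonneg])
qed

lemma I_seq_val_ring_eq_ball:
  fixes v :: "'k::field \<Rightarrow> real" and c :: "nat \<Rightarrow> 'k"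
  assumes v: "nonarch_abs v" and "0 < p" and vp: "0 < v (of_nat p)" "v (of_nat p) \<le> 1"
    and "c 0 = 1" and c_Suc: "\<And>i. c (Suc i) ^ p = of_nat p * c i"
  shows "I_seq p (val_ring v) i = abs_ball v 0 (v (c i)) \<and> v (c i) \<le> 1"
proof (induction i)
  case 0
  show ?case
    using \<open>c 0 = 1\<close> by (simp add: val_ring_def abs_ball_def nonarch_abs_one[OF v])
next
  case (Suc i)
  have p_nz: "(of_nat p :: 'k) \<noteq> 0"
    using vp(1) nonarch_abs_zero[OF v] by auto
  have v_Suc: "v (c (Suc i)) ^ p = v (of_nat p) * v (c i)"
    by (metis c_Suc nonarch_abs_mult[OF v] nonarch_abs_power[OF v])
  have le_Suc_iff: "v r \<le> v (c (Suc i)) \<longleftrightarrow> v (r ^ p / of_nat p) \<le> v (c i)" for r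
  proof -
    have "v r ^ p = v (of_nat p) * v (r ^ p / of_nat p)"
      using p_nz by (simp flip: nonarch_abs_mult[OF v] nonarch_abs_power[OF v])
    then have "v r ^ p \<le> v (c (Suc i)) ^ p \<longleftrightarrow> v (r ^ p / of_nat p) \<le> v (c i)"
      using vp(1) by (simp add: v_Suc)
    then show ?thesis
      using \<open>0 < p\<close> by (simp add: power_mono_iff nonarch_abs_nonneg[OF v])
  qed
  have "v (c (Suc i)) ^ p \<le> 1"
    using Suc vp nonarch_abs_nonneg[OF v] by (simp add: v_Suc mult_le_one)
  then have c_Suc_le: "v (c (Suc i)) \<le> 1"
    using \<open>0 < p\<close> by (simp add: power_le_one_iff nonarch_abs_nonneg[OF v])
  have "r ^ p \<in> {of_nat p * x | x. x \<in> abs_ball v 0 (v (c i))}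
    \<longleftrightarrow> v r \<le> v (c (Suc i))" for r :: 'k
    unfolding le_Suc_iff using p_nz by (auto simp: abs_ball_def intro!: exI[of _ "r ^ p / of_nat p"])
  then show ?case
    using Suc c_Suc_le by (auto simp: val_ring_def abs_ball_def)
qed

lemma coset_eq_abs_ball: "coset r (abs_ball v 0 \<rho>) = abs_ball v r \<rho>"
  by (auto simp: coset_def abs_ball_def intro!: exI[of _ "_ - r"])

theorem lemma5p5:
  fixes p :: nat and v :: "'k::field_char_0 \<Rightarrow> real"
  assumes "prime p" and "is_Cp p v"
  shows "\<not> nested_coset_condition p (val_ring v)"
proof
  assume cond: "nested_coset_condition p (val_ring v)"
  have v: "nonarch_abs v" and closed: "alg_closed_field TYPE('k)"
    and dense: "\<And>x e. 0 < e \<Longrightarrow> \<exists>y\<in>{y. algebraic y}. v (x - y) < e"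
    using assms(2) unfolding is_Cp_def by auto
  have p: "2 \<le> p" and vp: "v (of_nat p) = 1 / real p"
    using assms is_Cp_def padic_abs_prime prime_ge_2_nat by (metis of_rat_of_nat_eq)+
  obtain c :: "nat \<Rightarrow> 'k" where c0: "c 0 = 1" and c_Suc: "\<And>i. c (Suc i) ^ p = of_nat p * c i"
    using alg_closed_field_root_chain[OF closed] p by (metis one_le_numeral order.trans)
  have v_c_Suc: "v (c (Suc i)) ^ p = v (c i) * (1 / real p)" for i
    by (metis c_Suc vp mult.commute nonarch_abs_mult[OF v] nonarch_abs_power[OF v])
  have radii: "root (p - 1) (1 / real p) < v (c i)" "v (c (Suc i)) < v (c i)" for i
    using root_chain_radii[where s="\<lambda>i. v (c i)", OF p _ _ _ v_c_Suc nonarch_abs_nonneg[OF v]]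
      p c0 nonarch_abs_one[OF v] by auto
  have ideals: "I_seq p (val_ring v) i = abs_ball v 0 (v (c i))" for i
    using I_seq_val_ring_eq_ball[OF v _ _ _ c0 c_Suc] p vp by simp
  obtain r where r0: "r 0 = 0"
    and nested: "\<And>i. abs_ball v (r (Suc i)) (v (c (Suc i))) \<subseteq> abs_ball v (r i) (v (c i))"
    and empty: "(\<Inter>i. abs_ball v (r i) (v (c i))) = {}"
    using nonarch_abs_nested_balls_empty[where c=c and \<delta>="root (p - 1) (1 / real p)",
        OF v countable_algebraic dense radii(2)]
      radii(1) p by (auto simp: real_root_gt_zero)
  have "r i \<in> abs_ball v (r i) (v (c i))" for i
    by (simp add: abs_ball_def nonarch_abs_zero[OF v] nonarch_abs_nonneg[OF v])
  then have "r i \<in> abs_ball v (r 0) (v (c 0))" for i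
    using lift_Suc_antimono_le[of "\<lambda>i. abs_ball v (r i) (v (c i))", OF nested, of 0 i] by blast
  then have "r i \<in> val_ring v" for i
    using r0 c0 by (simp add: abs_ball_def val_ring_def nonarch_abs_one[OF v])
  with cond nested show False
    unfolding nested_coset_condition_def ideals coset_eq_abs_ball using empty by blast
qed

end
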